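(* Let $\mathcal Q=(\mathcal G,\mathcal C)$ be a CWS code in standard form with $K=|\mathcal C|>1$, and suppose the $j$-th bit is involved in $\mathcal C$. Then the graph-stabilizer generator $S_j=X_jZ^{\mathbf r_j}$ is not detectable by $\mathcal Q$. Consequently the distance of $\mathcal Q$ is at most $\mathrm{wgt}(S_j)=1+\deg_{\mathcal G}(j)$.
   Context: A Pauli operator on $n$ qubits is, up to a phase, $X^{\mathbf v}Z^{\mathbf u}=X_1^{v_1}\cdots X_n^{v_n}Z_1^{u_1}\cdots Z_n^{u_n}$ with $\mathbf v,\mathbf u\in\{0,1\}^n$; its weight is the number of qubits on which it acts as a non-identity operator. For a subspace $\mathcal Q\subseteq(\mathbb C^2)^{\otimes n}$ with orthonormal basis $\{|i\rangle\}$, a Pauli operator $E$ is detectable if $\langle j|E|i\rangle=C_E\delta_{ij}$ for all $i,j$, with $C_E$ independent of $i,j$; the distance of $\mathcal Q$ is the smallest weight of a non-detectable Pauli operator. Let $\mathcal G$ be a simple graph on vertex set $\{1,\dots,n\}$ with adjacency matrix $R\in\{0,1\}^{n\times n}$ (symmetric, zero diagonal) and rows $\mathbf r_i$. The graph-stabilizer generators are $S_i=X_iZ^{\mathbf r_i}$, $i=1,\dots,n$; they commute, generate an abelian group $\mathscr S_{\mathcal G}$, and stabilize a unique (up to phase) state $|s\rangle$, the graph state. For a binary code $\mathcal C\subseteq\{0,1\}^n$ with $K$ words, the CWS code in standard form is $\mathcal Q=(\mathcal G,\mathcal C)=\operatorname{span}\{Z^{\mathbf c}|s\rangle:\mathbf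 c\in\mathcal C\}$; it has dimension $K$. The $j$-th bit is involved in $\mathcal C$ if there exist $\mathbf c_1,\mathbf c_2\in\mathcal C$ whose $j$-th coordinates differ. *)

theory Defs
  imports Complex_Main
begin

text \<open>Qubits are indexed 0..n-1. Computational basis vectors are bit strings
  x :: nat => bool vanishing outside {0..<n}.\<close>

definition bits :: "nat \<Rightarrow> (nat \<Rightarrow> bool) set" where
  "bits n = {x. \<forall>i\<ge>n. \<not> x i}"

type_synonym qstate = "(nat \<Rightarrow> bool) \<Rightarrow> complex"

definition vecs :: "nat \<Rightarrow> qstate set" where
  "vecs n = {\<psi>. \<forall>y. y \<notin> bits n \<longrightarrow> \<psi> y = 0}"

definition inner_q :: "nat \<Rightarrow> qstate \<Rightarrow> qstate \<Rightarrow> complex" where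
  "inner_q n \<phi> \<psi> = (\<Sum>y\<in>bits n. cnj (\<phi> y) * \<psi> y)"

definition bxor :: "(nat \<Rightarrow> bool) \<Rightarrow> (nat \<Rightarrow> bool) \<Rightarrow> (nat \<Rightarrow> bool)" where
  "bxor x y = (\<lambda>i. x i \<noteq> y i)"

text \<open>The Pauli operator X^v Z^u: X^v Z^u |x> = (-1)^(u.x) |x xor v>.\<close>
definition pauli :: "nat \<Rightarrow> (nat \<Rightarrow> bool) \<Rightarrow> (nat \<Rightarrow> bool) \<Rightarrow> qstate \<Rightarrow> qstate" where
  "pauli n v u \<psi> = (\<lambda>y. (-1) ^ card {i. i < n \<and> u i \<and> bxor y v i} * \<psi> (bxor y v))"

definition pauli_weight :: "nat \<Rightarrow> (nat \<Rightarrow> bool) \<Rightarrow> (nat \<Rightarrow> bool) \<Rightarrow> nat" where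
  "pauli_weight n v u = card {i. i < n \<and> (v i \<or> u i)}"

definition simple_graph :: "nat \<Rightarrow> (nat \<Rightarrow> nat \<Rightarrow> bool) \<Rightarrow> bool" where
  "simple_graph n R \<longleftrightarrow> (\<forall>i j. R i j \<longrightarrow> i < n \<and> j < n) \<and>
     (\<forall>i j. R i j \<longleftrightarrow> R j i) \<and> (\<forall>i. \<not> R i i)"

definition adj_row :: "nat \<Rightarrow> (nat \<Rightarrow> nat \<Rightarrow> bool) \<Rightarrow> nat \<Rightarrow> (nat \<Rightarrow> bool)" where
  "adj_row n R i = (\<lambda>k. k < n \<and> R i k)"

definition unit_bit :: "nat \<Rightarrow> (nat \<Rightarrow> bool)" where
  "unit_bit i = (\<lambda>k. k = i)"

definition degree :: "nat \<Rightarrow> (nat \<Rightarrow> nat \<Rightarrow> bool) \<Rightarrow> nat \<Rightarrow> nat" where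
  "degree n R i = card {k. k < n \<and> R i k}"

definition graph_stab :: "nat \<Rightarrow> (nat \<Rightarrow> nat \<Rightarrow> bool) \<Rightarrow> nat \<Rightarrow> qstate \<Rightarrow> qstate" where
  "graph_stab n R i = pauli n (unit_bit i) (adj_row n R i)"

definition is_graph_state :: "nat \<Rightarrow> (nat \<Rightarrow> nat \<Rightarrow> bool) \<Rightarrow> qstate \<Rightarrow> bool" where
  "is_graph_state n R s \<longleftrightarrow> s \<in> vecs n \<and> inner_q n s s = 1 \<and>
     (\<forall>i<n. graph_stab n R i s = s)"

text \<open>CWS code in standard form: span of Z^c |s>, c in C.\<close>
definition cws_code :: "nat \<Rightarrow> qstate \<Rightarrow> (nat \<Rightarrow> bool) set \<Rightarrow> qstate set" where
  "cws_code n s C = {\<psi>. \<exists>a. \<psi> = (\<lambda>y. \<Sum>c\<in>C. a c * pauli n (\<lambda>_. False) c s y)}"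

definition orthonormal_basis :: "nat \<Rightarrow> qstate set \<Rightarrow> qstate set \<Rightarrow> bool" where
  "orthonormal_basis n Q B \<longleftrightarrow> finite B \<and> B \<subseteq> Q \<and>
     (\<forall>b\<in>B. inner_q n b b = 1) \<and>
     (\<forall>b\<in>B. \<forall>b'\<in>B. b \<noteq> b' \<longrightarrow> inner_q n b b' = 0) \<and>
     (\<forall>\<psi>\<in>Q. \<exists>a. \<psi> = (\<lambda>y. \<Sum>b\<in>B. a b * b y))"

text \<open>E detectable: <j|E|i> = C_E delta_ij for an orthonormal basis of Q
  (we require it for every orthonormal basis; the notion is basis independent).\<close>
definition detectable :: "nat \<Rightarrow> qstate set \<Rightarrow> (qstate \<Rightarrow> qstate) \<Rightarrow> bool" where
  "detectable n Q E \<longleftrightarrow> (\<forall>B. orthonormal_basis n Q B \<longrightarrow>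
     (\<exists>CE. \<forall>i\<in>B. \<forall>j\<in>B. inner_q n j (E i) = (if i = j then CE else 0)))"

definition code_distance :: "nat \<Rightarrow> qstate set \<Rightarrow> nat" where
  "code_distance n Q = (LEAST w. \<exists>v\<in>bits n. \<exists>u\<in>bits n.
      \<not> detectable n Q (pauli n v u) \<and> pauli_weight n v u = w)"

end

theory Submission
  imports Defs
begin

(* Write Z^c for the diagonal Pauli operator pauli n 0 c.  The vectors Z^c|s>, c in C,
   form an orthonormal basis of the CWS code: each has norm 1 because Z^c is a diagonal
   map with entries +-1, and two of them are orthogonal because the summand of
   their inner product changes sign under flipping a bit on which the codewords differ
   (the graph state has |s(y)| invariant under such flips, as S_i s = s).
   The generator S_j commutes or anticommutes with Z^c according to the bit c_j, and
   S_j s = s, hence S_j Z^c|s> = (-1)^(c_j) Z^c|s>.  If bit j is involved, two basis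
   vectors give diagonal entries +1 and -1, so S_j is not detectable.  The distance
   bound follows because code_distance is the least weight of a non-detectable Pauli,
   and the weight of S_j = X_j Z^(r_j) is 1 + deg j since the graph has no loops. *)

definition pauli_Z :: "nat \<Rightarrow> (nat \<Rightarrow> bool) \<Rightarrow> qstate \<Rightarrow> qstate" where
  "pauli_Z n c = pauli n (\<lambda>_. False) c"

lemma minus_one_power_square: "((-1::complex) ^ k) * (-1) ^ k = 1"
  by (simp flip: power_mult_distrib)

lemma bxor_cancel: "bxor (bxor y v) v = y"
  by (auto simp: bxor_def)

lemma bxor_unit_bit_in_bits: "i < n \<Longrightarrow> y \<in> bits n \<Longrightarrow> bxor y (unit_bit i) \<in> bits n"
  by (auto simp: bits_def bxor_def unit_bit_def)

lemma parity_flip: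
  assumes "i < n"
  shows "(-1::complex) ^ card {k. k < n \<and> c k \<and> bxor y (unit_bit i) k}
       = (if c i then -1 else 1) * (-1) ^ card {k. k < n \<and> c k \<and> y k}"
proof -
  let ?A = "{k. k < n \<and> c k \<and> y k}"
  let ?A' = "{k. k < n \<and> c k \<and> bxor y (unit_bit i) k}"
  consider "\<not> c i" | "c i" "y i" | "c i" "\<not> y i" by blast
  then show ?thesis
  proof cases
    case 1
    then have "?A' = ?A" by (auto simp: bxor_def unit_bit_def)
    then show ?thesis using 1 by simp
  next
    case 2
    then have "?A' = ?A - {i}" "i \<in> ?A"
      using assms by (auto simp: bxor_def unit_bit_def)
    then have "card ?A = Suc (card ?A')" by (metis card_Suc_Diff1 finite_Collect_conjI finite_Collect_less_nat)
    then show ?thesis using 2 by simp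
  next
    case 3
    then have "?A' = insert i ?A" "i \<notin> ?A"
      using assms by (auto simp: bxor_def unit_bit_def)
    then have "card ?A' = Suc (card ?A)" by simp
    then show ?thesis using 3 by simp
  qed
qed

lemma pauli_Z_apply: "pauli_Z n c \<psi> = (\<lambda>y. (-1) ^ card {i. i < n \<and> c i \<and> y i} * \<psi> y)"
  by (simp add: pauli_Z_def pauli_def bxor_def)

lemma graph_stab_apply:
  "graph_stab n R j \<psi> = (\<lambda>y. (-1) ^ card {i. i < n \<and> adj_row n R j i \<and> bxor y (unit_bit j) i}
                              * \<psi> (bxor y (unit_bit j)))"
  by (simp add: graph_stab_def pauli_def)

(* S_j Z^c = (-1)^(c_j) Z^c S_j: X_j anticommutes with Z_j and Z^(r_j) commutes with Z^c. *)
lemma graph_stab_pauli_Z_commute: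
  assumes "j < n"
  shows "graph_stab n R j (pauli_Z n c \<psi>) = (\<lambda>y. (if c j then -1 else 1) * pauli_Z n c (graph_stab n R j \<psi>) y)"
  unfolding graph_stab_apply pauli_Z_apply using parity_flip[OF assms, of c]
  by (simp add: algebra_simps)

lemma pauli_Z_norm: "inner_q n (pauli_Z n c \<psi>) (pauli_Z n c \<psi>) = inner_q n \<psi> \<psi>"
  unfolding inner_q_def pauli_Z_apply
  by (rule sum.cong) (auto simp: algebra_simps minus_one_power_square)

lemma graph_state_modulus_flip:
  assumes "is_graph_state n R s" "i < n"
  shows "cnj (s (bxor y (unit_bit i))) * s (bxor y (unit_bit i)) = cnj (s y) * s y"
proof -
  have "graph_stab n R i s y = s y" using assms unfolding is_graph_state_def by auto
  then have "s y = (-1) ^ card {k. k < n \<and> adj_row n R i k \<and> bxor y (unit_bit i) k}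
                   * s (bxor y (unit_bit i))"
    unfolding graph_stab_apply by simp
  then show ?thesis by (simp add: algebra_simps minus_one_power_square)
qed

(* Distinct codewords give orthogonal states Z^c|s>: the summand of the inner product is
   odd under flipping a bit where the codewords differ. *)
lemma graph_state_pauli_Z_orthogonal:
  assumes gs: "is_graph_state n R s" and "c \<in> bits n" "c' \<in> bits n" "c \<noteq> c'"
  shows "inner_q n (pauli_Z n c s) (pauli_Z n c' s) = 0"
proof -
  obtain i where ci: "c i \<noteq> c' i" using \<open>c \<noteq> c'\<close> by blast
  have i: "i < n" using assms(2,3) ci unfolding bits_def by (metis mem_Collect_eq not_le)
  define g where "g y = (-1::complex) ^ card {k. k < n \<and> c k \<and> y k}
                        * (-1) ^ card {k. k < n \<and> c' k \<and> y k} * (cnj (s y) * s y)" for y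
  have inner: "inner_q n (pauli_Z n c s) (pauli_Z n c' s) = sum g (bits n)"
    unfolding inner_q_def pauli_Z_apply g_def by (rule sum.cong) (auto simp: algebra_simps)
  have odd: "g (bxor y (unit_bit i)) = - g y" for y
    unfolding g_def using parity_flip[OF i, of c y] parity_flip[OF i, of c' y]
      graph_state_modulus_flip[OF gs i, of y] ci
    by (cases "c i") auto
  have "sum g (bits n) = sum (\<lambda>y. g (bxor y (unit_bit i))) (bits n)"
    by (rule sum.reindex_bij_witness[where i="\<lambda>y. bxor y (unit_bit i)" and j="\<lambda>y. bxor y (unit_bit i)"])
       (auto simp: bxor_cancel bxor_unit_bit_in_bits[OF i])
  also have "\<dots> = - sum g (bits n)" by (simp add: odd sum_negf)
  finally show ?thesis using inner by simp
qed

lemma cws_code_orthonormal_basis: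
  assumes gs: "is_graph_state n R s" and C: "C \<subseteq> bits n" "finite C"
  shows "orthonormal_basis n (cws_code n s C) ((\<lambda>c. pauli_Z n c s) ` C)"
proof -
  let ?Z = "\<lambda>c. pauli_Z n c s"
  have norm: "inner_q n (?Z c) (?Z c) = 1" for c
    using gs pauli_Z_norm unfolding is_graph_state_def by metis
  have orth: "c \<in> C \<Longrightarrow> c' \<in> C \<Longrightarrow> c \<noteq> c' \<Longrightarrow> inner_q n (?Z c) (?Z c') = 0" for c c'
    using graph_state_pauli_Z_orthogonal[OF gs] C(1) by blast
  have inj: "inj_on ?Z C"
    by (rule inj_onI) (metis norm orth zero_neq_one)
  have in_code: "?Z c \<in> cws_code n s C" if "c \<in> C" for c
  proof -
    have "?Z c = (\<lambda>y. \<Sum>c'\<in>C. (if c' = c then 1 else 0) * pauli n (\<lambda>_. False) c' s y)"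
      using that C(2) by (simp add: pauli_Z_def if_distrib[of "\<lambda>x. x * _"] sum.delta' cong: if_cong)
    then show ?thesis unfolding cws_code_def by (intro CollectI exI)
  qed
  have spans: "\<exists>a. \<psi> = (\<lambda>y. \<Sum>b\<in>?Z ` C. a b * b y)" if \<psi>: "\<psi> \<in> cws_code n s C" for \<psi>
  proof -
    obtain a where a: "\<psi> = (\<lambda>y. \<Sum>c\<in>C. a c * pauli n (\<lambda>_. False) c s y)"
      using \<psi> unfolding cws_code_def by blast
    have "\<psi> = (\<lambda>y. \<Sum>b\<in>?Z ` C. (a \<circ> the_inv_into C ?Z) b * b y)"
      unfolding a by (subst sum.reindex[OF inj]) (simp add: the_inv_into_f_f[OF inj], simp add: pauli_Z_def)
    then show ?thesis by blast
  qed
  show ?thesis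
    unfolding orthonormal_basis_def using C(2) norm orth in_code spans by blast
qed

lemma graph_stab_diagonal_entry:
  assumes gs: "is_graph_state n R s" and "j < n"
  shows "inner_q n (pauli_Z n c s) (graph_stab n R j (pauli_Z n c s)) = (if c j then -1 else 1)"
proof -
  have "graph_stab n R j s = s" using gs assms(2) unfolding is_graph_state_def by blast
  then have "graph_stab n R j (pauli_Z n c s) = (\<lambda>y. (if c j then -1 else 1) * pauli_Z n c s y)"
    using graph_stab_pauli_Z_commute[OF assms(2)] by simp
  moreover have "inner_q n (pauli_Z n c s) (pauli_Z n c s) = 1"
    using gs pauli_Z_norm unfolding is_graph_state_def by metis
  ultimately show ?thesis
    unfolding inner_q_def by (simp add: sum_distrib_left[symmetric] mult.left_commute sum_negf)
qed

lemma not_detectable_if_diagonal_differs: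
  assumes "orthonormal_basis n Q B" "b1 \<in> B" "b2 \<in> B"
    and "inner_q n b1 (E b1) \<noteq> inner_q n b2 (E b2)"
  shows "\<not> detectable n Q E"
  using assms unfolding detectable_def by fastforce

lemma code_distance_le_weight:
  assumes "v \<in> bits n" "u \<in> bits n" "\<not> detectable n Q (pauli n v u)"
  shows "code_distance n Q \<le> pauli_weight n v u"
  unfolding code_distance_def by (rule Least_le) (use assms in blast)

(* S_j acts on qubit j (by X) and on the neighbours of j (by Z); j is not its own neighbour. *)
lemma graph_stab_weight:
  assumes "simple_graph n R" "j < n"
  shows "pauli_weight n (unit_bit j) (adj_row n R j) = 1 + degree n R j"
proof -
  have "{i. i < n \<and> (unit_bit j i \<or> adj_row n R j i)} = insert j {k. k < n \<and> R j k}"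
    using assms(2) by (auto simp: unit_bit_def adj_row_def)
  moreover have "j \<notin> {k. k < n \<and> R j k}" using assms(1) unfolding simple_graph_def by blast
  ultimately show ?thesis unfolding pauli_weight_def degree_def by simp
qed

theorem lemma3:
  fixes n :: nat and R :: "nat \<Rightarrow> nat \<Rightarrow> bool" and s :: qstate
    and C :: "(nat \<Rightarrow> bool) set" and j :: nat
  assumes "simple_graph n R"
    and "is_graph_state n R s"
    and "C \<subseteq> bits n" and "finite C" and "card C > 1"
    and "j < n" and "\<exists>c1\<in>C. \<exists>c2\<in>C. c1 j \<noteq> c2 j"
  shows "\<not> detectable n (cws_code n s C) (graph_stab n R j)
    \<and> code_distance n (cws_code n s C) \<le> pauli_weight n (unit_bit j) (adj_row n R j)
    \<and> pauli_weight n (unit_bit j) (adj_row n R j) = 1 + degree n R j"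
proof -
  obtain c1 c2 where c: "c1 \<in> C" "c2 \<in> C" "c1 j \<noteq> c2 j" using assms(7) by blast
  have not_det: "\<not> detectable n (cws_code n s C) (graph_stab n R j)"
  proof (rule not_detectable_if_diagonal_differs)
    show "orthonormal_basis n (cws_code n s C) ((\<lambda>c. pauli_Z n c s) ` C)"
      using cws_code_orthonormal_basis[OF assms(2-4)] .
    show "inner_q n (pauli_Z n c1 s) (graph_stab n R j (pauli_Z n c1 s))
        \<noteq> inner_q n (pauli_Z n c2 s) (graph_stab n R j (pauli_Z n c2 s))"
      using graph_stab_diagonal_entry[OF assms(2,6)] c(3) by simp
  qed (use c in auto)
  have "unit_bit j \<in> bits n" "adj_row n R j \<in> bits n"
    using assms(6) by (auto simp: bits_def unit_bit_def adj_row_def)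
  then have "code_distance n (cws_code n s C) \<le> pauli_weight n (unit_bit j) (adj_row n R j)"
    using code_distance_le_weight not_det unfolding graph_stab_def by blast
  then show ?thesis using not_det graph_stab_weight[OF assms(1,6)] by blast
qed

end
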